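(* Let $\mathcal{S}\subseteq\{0,1\}^N$ be nonempty. The following are equivalent: (1) $\mathcal{S}$ is a lattice (closed under coordinatewise minimum and maximum); (2) $\mathcal{S}$ is the set of minimizers of some submodular function $g:\{0,1\}^N\to\mathbb{R}$; (3) the Hamming distance function $d_{\mathcal{S}}(x)=\min_{y\in\mathcal{S}}\|x-y\|_1$ is submodular.
   Context: A function $g:\{0,1\}^N\to\mathbb{R}$ is submodular if $g(x\vee y)+g(x\wedge y)\le g(x)+g(y)$ for all $x,y$, where $\vee,\wedge$ are coordinatewise max and min. *)

theory Defs
  imports Main Complex_Main
begin

text \<open>Points of {0,1}^N are functions 'n => bool on a finite index type 'n
  (False = 0, True = 1). The pointwise sup / inf on such functions are the
  coordinatewise max / min.\<close>

definition submodular :: "(('n::finite \<Rightarrow> bool) \<Rightarrow> real) \<Rightarrow> bool" where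
  "submodular g \<longleftrightarrow> (\<forall>x y. g (sup x y) + g (inf x y) \<le> g x + g y)"

definition is_lattice_set :: "('n::finite \<Rightarrow> bool) set \<Rightarrow> bool" where
  "is_lattice_set S \<longleftrightarrow> (\<forall>x\<in>S. \<forall>y\<in>S. sup x y \<in> S \<and> inf x y \<in> S)"

definition minimizers :: "(('n::finite \<Rightarrow> bool) \<Rightarrow> real) \<Rightarrow> ('n \<Rightarrow> bool) set" where
  "minimizers g = {x. \<forall>y. g x \<le> g y}"

definition hamming :: "('n::finite \<Rightarrow> bool) \<Rightarrow> ('n \<Rightarrow> bool) \<Rightarrow> nat" where
  "hamming x y = card {i. x i \<noteq> y i}"

definition dist_to_set :: "('n::finite \<Rightarrow> bool) set \<Rightarrow> ('n \<Rightarrow> bool) \<Rightarrow> real" where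
  "dist_to_set S x = Min ((\<lambda>y. real (hamming x y)) ` S)"

end

theory Submission
  imports Defs
begin

text \<open>A lattice of 0/1 vectors is the minimizer set of its own Hamming distance function
  \<open>d\<^sub>S\<close>, and \<open>d\<^sub>S\<close> is submodular: if \<open>a, b \<in> S\<close> are nearest points to \<open>x, y\<close>, then
  \<open>a \<squnion> b\<close> and \<open>a \<sqinter> b\<close> lie in \<open>S\<close>, and coordinatewise
  \<open>[x\<^sub>i \<or> y\<^sub>i \<noteq> a\<^sub>i \<or> b\<^sub>i] + [x\<^sub>i \<and> y\<^sub>i \<noteq> a\<^sub>i \<and> b\<^sub>i] \<le> [x\<^sub>i \<noteq> a\<^sub>i] + [y\<^sub>i \<noteq> b\<^sub>i]\<close>.
  Conversely, the minimizers of any submodular \<open>g\<close> form a lattice, since for minimizers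
  \<open>x, y\<close> submodularity forces \<open>g (x \<squnion> y) = g (x \<sqinter> y) = min g\<close>.\<close>

lemma hamming_eq_sum: "hamming x y = (\<Sum>i\<in>UNIV. if x i \<noteq> y i then 1 else 0)"
  unfolding hamming_def by (simp add: sum.If_cases)

lemma hamming_eq_0_iff: "hamming x y = 0 \<longleftrightarrow> x = y"
  unfolding hamming_def by (auto simp: fun_eq_iff)

lemma hamming_sup_inf_le:
  "hamming (sup x y) (sup a b) + hamming (inf x y) (inf a b) \<le> hamming x a + hamming y b"
proof -
  have pointwise: "(if (p \<or> q) \<noteq> (r \<or> s) then 1 else 0) + (if (p \<and> q) \<noteq> (r \<and> s) then 1 else 0)
      \<le> (if p \<noteq> r then 1 else 0) + (if q \<noteq> s then 1 else (0::nat))" for p q r s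
    by (cases p; cases q; cases r; cases s) simp_all
  have "hamming (sup x y) (sup a b) + hamming (inf x y) (inf a b)
      = (\<Sum>i\<in>UNIV. (if (x i \<or> y i) \<noteq> (a i \<or> b i) then 1 else 0)
                   + (if (x i \<and> y i) \<noteq> (a i \<and> b i) then 1 else 0))"
    by (simp add: hamming_eq_sum sum.distrib)
  also have "\<dots> \<le> (\<Sum>i\<in>UNIV. (if x i \<noteq> a i then 1 else 0) + (if y i \<noteq> b i then 1 else 0))"
    by (intro sum_mono pointwise)
  also have "\<dots> = hamming x a + hamming y b"
    by (simp add: hamming_eq_sum sum.distrib)
  finally show ?thesis .
qed

lemma dist_to_set_le: "y \<in> S \<Longrightarrow> dist_to_set S x \<le> real (hamming x y)"
  unfolding dist_to_set_def by (rule Min_le) simp_all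

lemma dist_to_set_attained:
  assumes "S \<noteq> {}"
  obtains a where "a \<in> S" and "dist_to_set S x = real (hamming x a)"
proof -
  have "dist_to_set S x \<in> (\<lambda>y. real (hamming x y)) ` S"
    unfolding dist_to_set_def using assms by (intro Min_in) simp_all
  then show thesis using that by blast
qed

lemma dist_to_set_nonneg: "S \<noteq> {} \<Longrightarrow> 0 \<le> dist_to_set S x"
  by (metis dist_to_set_attained of_nat_0_le_iff)

lemma dist_to_set_eq_0_iff:
  assumes "S \<noteq> {}"
  shows "dist_to_set S x = 0 \<longleftrightarrow> x \<in> S"
proof
  assume "dist_to_set S x = 0"
  moreover obtain a where "a \<in> S" "dist_to_set S x = real (hamming x a)"
    using dist_to_set_attained assms .
  ultimately show "x \<in> S" using hamming_eq_0_iff[of x a] by simp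
next
  assume "x \<in> S"
  then show "dist_to_set S x = 0"
    using dist_to_set_le[of x S x] dist_to_set_nonneg[OF assms, of x] hamming_eq_0_iff[of x x]
    by simp
qed

lemma submodular_dist_to_set:
  assumes "S \<noteq> {}" and "is_lattice_set S"
  shows "submodular (dist_to_set S)"
  unfolding submodular_def
proof (intro allI)
  fix x y
  obtain a where a: "a \<in> S" "dist_to_set S x = real (hamming x a)"
    using dist_to_set_attained assms(1) .
  obtain b where b: "b \<in> S" "dist_to_set S y = real (hamming y b)"
    using dist_to_set_attained assms(1) .
  have "sup a b \<in> S" "inf a b \<in> S"
    using a b assms(2) unfolding is_lattice_set_def by auto
  then have "dist_to_set S (sup x y) + dist_to_set S (inf x y)
      \<le> real (hamming (sup x y) (sup a b)) + real (hamming (inf x y) (inf a b))"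
    by (intro add_mono dist_to_set_le)
  also have "\<dots> \<le> real (hamming x a) + real (hamming y b)"
    using hamming_sup_inf_le[of x y a b] by linarith
  finally show "dist_to_set S (sup x y) + dist_to_set S (inf x y)
      \<le> dist_to_set S x + dist_to_set S y"
    using a b by simp
qed

lemma minimizers_nonneg_eq_zero_set:
  assumes "\<And>x. 0 \<le> g x" and "g a = 0"
  shows "minimizers g = {x. g x = 0}"
  unfolding minimizers_def using assms by (metis (mono_tags, lifting) order_antisym)

lemma minimizers_dist_to_set:
  assumes "S \<noteq> {}"
  shows "minimizers (dist_to_set S) = S"
proof -
  obtain s where "s \<in> S" using assms by blast
  then have "minimizers (dist_to_set S) = {x. dist_to_set S x = 0}"
    using assms by (intro minimizers_nonneg_eq_zero_set dist_to_set_nonneg)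
      (simp_all add: dist_to_set_eq_0_iff)
  then show ?thesis using dist_to_set_eq_0_iff[OF assms] by auto
qed

lemma is_lattice_set_minimizers:
  assumes "submodular g"
  shows "is_lattice_set (minimizers g)"
  unfolding is_lattice_set_def
proof (intro ballI conjI)
  fix x y assume x: "x \<in> minimizers g" and y: "y \<in> minimizers g"
  then have "g x \<le> g (sup x y)" "g x \<le> g (inf x y)" "g x = g y"
    unfolding minimizers_def by (auto intro: order_antisym)
  moreover have "g (sup x y) + g (inf x y) \<le> g x + g y"
    using assms unfolding submodular_def by blast
  ultimately have "g (sup x y) = g x" "g (inf x y) = g x" by linarith+
  then show "sup x y \<in> minimizers g" "inf x y \<in> minimizers g"
    using x unfolding minimizers_def by simp_all
qed

theorem corollary2:
  fixes S :: "('n::finite \<Rightarrow> bool) set"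
  assumes "S \<noteq> {}"
  shows "(is_lattice_set S \<longleftrightarrow> (\<exists>g. submodular g \<and> S = minimizers g))
       \<and> (is_lattice_set S \<longleftrightarrow> submodular (dist_to_set S))"
proof -
  have "is_lattice_set S \<Longrightarrow> submodular (dist_to_set S)"
    using submodular_dist_to_set[OF assms] .
  moreover have "submodular (dist_to_set S) \<Longrightarrow> \<exists>g. submodular g \<and> S = minimizers g"
    using minimizers_dist_to_set[OF assms] by metis
  moreover have "\<exists>g. submodular g \<and> S = minimizers g \<Longrightarrow> is_lattice_set S"
    using is_lattice_set_minimizers by blast
  ultimately show ?thesis by blast
qed

end
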